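(* Let $p\in\mathbb{R}^d$ with $p\neq 0$, put $\hat p=p/\lVert p\rVert$, let $c=\hat c_{\hat p}$ be the class predicted for $\hat p$, and let $c'$ be the class in $\{0,\dots,k-1\}\setminus\{c\}$ with the highest value of $P(\hat c_{\hat p}=c')$. Define $$\epsilon_c=\sqrt{1+\frac{1}{2d}\Big(\hat p^T M^c\hat p-\hat p^T M^{c'}\hat p\Big)}-1,$$ and suppose $\epsilon_c>0$. If $$\lVert p\rVert\ \ge\ \frac{2}{\epsilon_c\sqrt{4-\epsilon_c^2}},$$ then for every $x\in\mathbb{R}^d$ with $\lVert x\rVert=1$, the normalized perturbed input $y=\frac{p+x}{\lVert p+x\rVert}$ is classified as $c$. That is, $P(\hat c_y=c)\ge P(\hat c_y=\tilde c)$ for all $\tilde c\in\{0,\dots,k-1\}$, so $c$ attains the maximum defining $\hat c_y$.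
   Context: Setting (noiseless PQC classifier acting on amplitude-encoded real data). We use the following notation. - $D\ge 0$ and $K\ge 0$ are integers. Put $d=2^D$, $k'=2^K$ and $n=2^{D+K}$. The number of classes $k$ satisfies $1\le k\le k'$. - $U\in\mathbb{C}^{n\times n}$ is a fixed unitary matrix, and $\lVert\cdot\rVert$ denotes the Euclidean norm. - All vectors and matrices are indexed from $0$. - For a unit vector $x\in\mathbb{R}^d$, let $e_0\in\mathbb{C}^{k'}$ be the first standard basis vector, and let $y=U(x\otimes e_0)\in\mathbb{C}^n$. Here $(x\otimes e_0)_{k's}=x_s$ and all other entries of $x\otimes e_0$ are $0$. - For $c\in\{0,\dots,k-1\}$, define the class-$c$ probability $P(\hat c_x=c)=\sum_{t=0}^{d-1}\lvert y_{k't+c}\rvert^2$. This is the probability that measuring the ancillary register gives $c$. - The predicted class is $\hat c_x=\arg\max_{c\in\{0,\dots,k-1\}}P(\hat c_x=c)$. - For each $c$, the $d\times d$ matrix $M^c$ is defined by $M^c_{ij}=\sum_{t=0}^{d-1}U^*_{k't+c,\,k'i}\,U_{k't+c,\,k'j}$, where $^*$ denotes complex conjugation. *)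

theory Defs
  imports Complex_Main
begin

text \<open>Matrices and vectors are functions on natural-number indices (indexed from 0),
  with explicit bounds. d = 2^D, k' = 2^K, n = 2^(D+K).\<close>

definition unitary_mat :: "nat \<Rightarrow> (nat \<Rightarrow> nat \<Rightarrow> complex) \<Rightarrow> bool" where
  "unitary_mat n U \<longleftrightarrow>
     (\<forall>i<n. \<forall>j<n. (\<Sum>t<n. cnj (U t i) * U t j) = (if i = j then 1 else 0)) \<and>
     (\<forall>i<n. \<forall>j<n. (\<Sum>t<n. U i t * cnj (U j t)) = (if i = j then 1 else 0))"

definition vnorm :: "nat \<Rightarrow> (nat \<Rightarrow> real) \<Rightarrow> real" where
  "vnorm d x = sqrt (\<Sum>i<d. (x i)\<^sup>2)"

definition tensor_e0 :: "nat \<Rightarrow> nat \<Rightarrow> (nat \<Rightarrow> real) \<Rightarrow> nat \<Rightarrow> complex" where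
  "tensor_e0 D K x r = (if r mod 2^K = 0 \<and> r div 2^K < 2^D then complex_of_real (x (r div 2^K)) else 0)"

definition out_state :: "nat \<Rightarrow> nat \<Rightarrow> (nat \<Rightarrow> nat \<Rightarrow> complex) \<Rightarrow> (nat \<Rightarrow> real) \<Rightarrow> nat \<Rightarrow> complex" where
  "out_state D K U x r = (\<Sum>s<2^(D+K). U r s * tensor_e0 D K x s)"

definition class_prob :: "nat \<Rightarrow> nat \<Rightarrow> (nat \<Rightarrow> nat \<Rightarrow> complex) \<Rightarrow> (nat \<Rightarrow> real) \<Rightarrow> nat \<Rightarrow> real" where
  "class_prob D K U x c = (\<Sum>t<2^D. (cmod (out_state D K U x (2^K * t + c)))\<^sup>2)"

definition Mmat :: "nat \<Rightarrow> nat \<Rightarrow> (nat \<Rightarrow> nat \<Rightarrow> complex) \<Rightarrow> nat \<Rightarrow> nat \<Rightarrow> nat \<Rightarrow> complex" where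
  "Mmat D K U c i j = (\<Sum>t<2^D. cnj (U (2^K * t + c) (2^K * i)) * U (2^K * t + c) (2^K * j))"

text \<open>v^T M^c v for a real vector v (a real number since M^c is Hermitian; we take Re).\<close>
definition qform :: "nat \<Rightarrow> nat \<Rightarrow> (nat \<Rightarrow> nat \<Rightarrow> complex) \<Rightarrow> nat \<Rightarrow> (nat \<Rightarrow> real) \<Rightarrow> real" where
  "qform D K U c v = Re (\<Sum>i<2^D. \<Sum>j<2^D. complex_of_real (v i) * Mmat D K U c i j * complex_of_real (v j))"

end

theory Submission
  imports Defs "HOL-Analysis.L2_Norm"
begin

text \<open>Write \<open>N\<^sub>c(v)\<close> for the Euclidean norm of the class-\<open>c\<close> block of \<open>U (v \<otimes> e\<^sub>0)\<close>, so that
  \<open>P(c | v) = N\<^sub>c(v)\<^sup>2\<close> and \<open>v\<^sup>T M\<^sup>c v = P(c | v)\<close>. Each \<open>N\<^sub>c\<close> is a seminorm, and since \<open>U\<close> is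
  unitary it is bounded by the Euclidean norm; moreover predictions are invariant under
  rescaling the input. Adding a unit vector \<open>x\<close> to \<open>p\<close> therefore moves every \<open>N\<^sub>c(p)\<close> by at
  most 1, so the prediction for \<open>p\<close> survives once \<open>\<parallel>p\<parallel> (N\<^sub>c(p\<^sub>0) - N\<^sub>c\<^sub>'(p\<^sub>0)) \<ge> 2\<close> with
  \<open>p\<^sub>0 = p / \<parallel>p\<parallel>\<close>. With \<open>s = (N\<^sub>c(p\<^sub>0)\<^sup>2 - N\<^sub>c\<^sub>'(p\<^sub>0)\<^sup>2) / 2d\<close> one has \<open>s = \<epsilon>(2 + \<epsilon>) \<ge> \<epsilon> sqrt(4 - \<epsilon>\<^sup>2)\<close>
  and \<open>N\<^sub>c(p\<^sub>0) - N\<^sub>c\<^sub>'(p\<^sub>0) \<ge> s\<close>, which turns the hypothesis on \<open>\<parallel>p\<parallel>\<close> into that margin.\<close>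

lemma vnorm_eq_L2_set: "vnorm d x = L2_set x {..<d}"
  by (simp add: vnorm_def L2_set_def)

lemma vnorm_pos: "\<exists>i<d. x i \<noteq> 0 \<Longrightarrow> 0 < vnorm d x"
  by (auto simp: vnorm_eq_L2_set L2_set_eq_0_iff less_le)

lemma vnorm_normalize: "0 < vnorm d x \<Longrightarrow> vnorm d (\<lambda>i. x i / vnorm d x) = 1"
  using L2_set_left_distrib[of "inverse (vnorm d x)" x "{..<d}"]
  by (simp add: vnorm_eq_L2_set divide_inverse)

lemma block_index_less:
  fixes t c :: nat
  assumes "t < 2^D" "c < 2^K"
  shows "2^K * t + c < 2^(D+K)"
proof -
  have "2^K * t + c < 2^K * (t + 1)" using assms(2) by simp
  also have "\<dots> \<le> 2^K * 2^D" using assms(1) by (intro mult_left_mono) auto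
  finally show ?thesis by (simp add: power_add mult.commute)
qed

lemma out_state_eq_sum:
  "out_state D K U x r = (\<Sum>s<2^D. U r (2^K * s) * complex_of_real (x s))"
proof -
  let ?f = "\<lambda>s. U r s * tensor_e0 D K x s"
  have "?f s = 0" if "s \<notin> (\<lambda>j. 2^K * j) ` {..<2^D}" for s
    using that by (auto simp: tensor_e0_def)
  then have "out_state D K U x r = (\<Sum>s\<in>(\<lambda>j. 2^K * j) ` {..<2^D}. ?f s)"
    unfolding out_state_def by (intro sum.mono_neutral_right) (auto simp: power_add)
  then show ?thesis
    by (simp add: sum.reindex inj_on_def tensor_e0_def)
qed

lemma out_state_add:
  "out_state D K U (\<lambda>i. v i + w i) r = out_state D K U v r + out_state D K U w r"
  by (simp add: out_state_eq_sum sum.distrib distrib_left)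

lemma out_state_scale:
  "out_state D K U (\<lambda>i. a * v i) r = complex_of_real a * out_state D K U v r"
  by (simp add: out_state_eq_sum sum_distrib_left mult_ac)

lemma sum_cmod_out_state_sq:
  assumes "unitary_mat (2^(D+K)) U"
  shows "(\<Sum>r<2^(D+K). (cmod (out_state D K U v r))\<^sup>2) = (\<Sum>s<2^D. (v s)\<^sup>2)"
proof -
  let ?k = "2^K :: nat"
  have cols: "(\<Sum>r<2^(D+K). cnj (U r (?k * s)) * U r (?k * s')) = (if s = s' then 1 else 0)"
    if "s < 2^D" "s' < 2^D" for s s'
    using assms that block_index_less[of _ D 0 K] unfolding unitary_mat_def by simp
  have "complex_of_real (\<Sum>r<2^(D+K). (cmod (out_state D K U v r))\<^sup>2)
      = (\<Sum>r<2^(D+K). cnj (out_state D K U v r) * out_state D K U v r)"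
    by (simp add: complex_norm_square mult.commute del: of_real_power)
  also have "\<dots> = (\<Sum>r<2^(D+K). \<Sum>s<2^D. \<Sum>s'<2^D.
                     complex_of_real (v s * v s') * (cnj (U r (?k * s)) * U r (?k * s')))"
    unfolding out_state_eq_sum cnj_sum sum_product by (simp add: mult_ac)
  also have "\<dots> = (\<Sum>s<2^D. \<Sum>s'<2^D. complex_of_real (v s * v s') *
                     (\<Sum>r<2^(D+K). cnj (U r (?k * s)) * U r (?k * s')))"
    unfolding sum_distrib_left by (subst sum.swap) (rule sum.cong[OF refl], rule sum.swap)
  also have "\<dots> = (\<Sum>s<2^D. \<Sum>s'<2^D. if s = s' then complex_of_real (v s * v s') else 0)"
    by (intro sum.cong refl) (simp add: cols)
  also have "\<dots> = complex_of_real (\<Sum>s<2^D. (v s)\<^sup>2)"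
    by (simp add: power2_eq_square)
  finally show ?thesis by (simp only: of_real_eq_iff)
qed

lemma class_prob_le_sum_sq:
  assumes "unitary_mat (2^(D+K)) U" "c < 2^K"
  shows "class_prob D K U v c \<le> (\<Sum>s<2^D. (v s)\<^sup>2)"
proof -
  let ?block = "(\<lambda>t. 2^K * t + c) ` {..<2^D}"
  have "class_prob D K U v c = (\<Sum>r\<in>?block. (cmod (out_state D K U v r))\<^sup>2)"
    unfolding class_prob_def by (simp add: sum.reindex inj_on_def)
  also have "\<dots> \<le> (\<Sum>r<2^(D+K). (cmod (out_state D K U v r))\<^sup>2)"
    using assms(2) block_index_less by (intro sum_mono2) auto
  also have "\<dots> = (\<Sum>s<2^D. (v s)\<^sup>2)"
    using assms(1) by (rule sum_cmod_out_state_sq)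
  finally show ?thesis .
qed

lemma qform_eq_class_prob: "qform D K U c v = class_prob D K U v c"
proof -
  let ?k = "2^K :: nat"
  have "complex_of_real (class_prob D K U v c)
     = (\<Sum>t<2^D. cnj (out_state D K U v (?k * t + c)) * out_state D K U v (?k * t + c))"
    by (simp add: class_prob_def complex_norm_square mult.commute del: of_real_power)
  also have "\<dots> = (\<Sum>t<2^D. \<Sum>i<2^D. \<Sum>j<2^D. complex_of_real (v i) *
                    (cnj (U (?k * t + c) (?k * i)) * U (?k * t + c) (?k * j)) * complex_of_real (v j))"
    unfolding out_state_eq_sum cnj_sum sum_product by (simp add: mult_ac)
  also have "\<dots> = (\<Sum>i<2^D. \<Sum>j<2^D. complex_of_real (v i) * Mmat D K U c i j * complex_of_real (v j))"
    unfolding Mmat_def sum_distrib_left sum_distrib_right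
    by (subst sum.swap) (rule sum.cong[OF refl], rule sum.swap)
  finally show ?thesis unfolding qform_def by (metis Re_complex_of_real)
qed

text \<open>The square root of \<^const>\<open>class_prob\<close>: unlike the probability, it satisfies the
  triangle inequality in the input vector.\<close>

definition class_amp :: "nat \<Rightarrow> nat \<Rightarrow> (nat \<Rightarrow> nat \<Rightarrow> complex) \<Rightarrow> (nat \<Rightarrow> real) \<Rightarrow> nat \<Rightarrow> real" where
  "class_amp D K U v c = L2_set (\<lambda>t. cmod (out_state D K U v (2^K * t + c))) {..<2^D}"

lemma class_prob_eq_class_amp_sq: "class_prob D K U v c = (class_amp D K U v c)\<^sup>2"
  by (simp add: class_prob_def class_amp_def L2_set_def sum_nonneg)

lemma class_prob_le_iff_class_amp_le:
  "class_prob D K U v c \<le> class_prob D K U v c' \<longleftrightarrow> class_amp D K U v c \<le> class_amp D K U v c'"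
  by (simp add: class_prob_eq_class_amp_sq class_amp_def power_mono_iff)

lemma class_amp_scale: "class_amp D K U (\<lambda>i. a * v i) c = \<bar>a\<bar> * class_amp D K U v c"
  by (simp add: class_amp_def out_state_scale norm_mult L2_set_right_distrib)

lemma class_amp_uminus: "class_amp D K U (\<lambda>i. - v i) c = class_amp D K U v c"
  using class_amp_scale[of D K U "- 1" v c] by simp

lemma class_prob_scale: "class_prob D K U (\<lambda>i. a * v i) c = a\<^sup>2 * class_prob D K U v c"
  by (simp add: class_prob_eq_class_amp_sq class_amp_scale power_mult_distrib)

lemma class_prob_le_scaled:
  "class_prob D K U v c \<le> class_prob D K U v c' \<Longrightarrow>
   class_prob D K U (\<lambda>i. v i / a) c \<le> class_prob D K U (\<lambda>i. v i / a) c'"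
  using class_prob_scale[of D K U "inverse a" v] by (simp add: divide_inverse mult.commute mult_right_mono)

lemma class_amp_add_le:
  "class_amp D K U (\<lambda>i. v i + w i) c \<le> class_amp D K U v c + class_amp D K U w c"
proof -
  have "class_amp D K U (\<lambda>i. v i + w i) c
      \<le> L2_set (\<lambda>t. cmod (out_state D K U v (2^K * t + c)) + cmod (out_state D K U w (2^K * t + c))) {..<2^D}"
    unfolding class_amp_def out_state_add by (intro L2_set_mono norm_triangle_ineq) simp
  also have "\<dots> \<le> class_amp D K U v c + class_amp D K U w c"
    unfolding class_amp_def by (rule L2_set_triangle_ineq)
  finally show ?thesis .
qed

lemma class_amp_le_vnorm:
  assumes "unitary_mat (2^(D+K)) U" "c < 2^K"
  shows "class_amp D K U v c \<le> vnorm (2^D) v"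
  using class_prob_le_sum_sq[OF assms, of v]
  by (simp add: class_prob_eq_class_amp_sq vnorm_def real_le_rsqrt)

lemma class_amp_order_robust:
  assumes U: "unitary_mat (2^(D+K)) U" and c: "c < 2^K" "c' < 2^K"
    and margin: "class_amp D K U p c' + 2 * vnorm (2^D) x \<le> class_amp D K U p c"
  shows "class_amp D K U (\<lambda>i. p i + x i) c' \<le> class_amp D K U (\<lambda>i. p i + x i) c"
proof -
  have "class_amp D K U (\<lambda>i. p i + x i) c' \<le> class_amp D K U p c' + class_amp D K U x c'"
    by (rule class_amp_add_le)
  also have "\<dots> \<le> class_amp D K U p c - vnorm (2^D) x"
    using class_amp_le_vnorm[OF U c(2), of x] margin by simp
  also have "\<dots> \<le> class_amp D K U (\<lambda>i. p i + x i) c"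
  proof -
    have "class_amp D K U p c \<le> class_amp D K U (\<lambda>i. p i + x i) c + class_amp D K U x c"
      using class_amp_add_le[of D K U "\<lambda>i. p i + x i" "\<lambda>i. - x i" c] by (simp add: class_amp_uminus)
    then show ?thesis using class_amp_le_vnorm[OF U c(1), of x] by simp
  qed
  finally show ?thesis .
qed

lemma epsilon_margin:
  fixes a b d r \<epsilon> :: real
  assumes d: "1 \<le> d" and a: "0 \<le> a" "a \<le> 1" and b: "0 \<le> b"
    and eps_def: "\<epsilon> = sqrt (1 + (1 / (2 * d)) * (a\<^sup>2 - b\<^sup>2)) - 1"
    and eps_pos: "0 < \<epsilon>"
    and r: "2 / (\<epsilon> * sqrt (4 - \<epsilon>\<^sup>2)) \<le> r"
  shows "2 \<le> r * (a - b)"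
proof -
  define s where "s = (a\<^sup>2 - b\<^sup>2) / (2 * d)"
  have "1 < sqrt (1 + s)" using eps_pos eps_def by (simp add: s_def)
  then have s_pos: "0 < s" by simp
  then have "(1 + \<epsilon>)\<^sup>2 = 1 + s" using eps_def by (simp add: s_def)
  then have s_eq: "s = \<epsilon> * (2 + \<epsilon>)" by (simp add: power2_eq_square algebra_simps)
  have "b < a"
  proof -
    have "b\<^sup>2 < a\<^sup>2" using s_pos d by (simp add: s_def zero_less_divide_iff)
    then show ?thesis using a(1) by (rule power2_less_imp_less)
  qed
  have "s \<le> 1 / 2"
  proof -
    have "a\<^sup>2 \<le> 1" using a by (simp add: power_le_one)
    then have "a\<^sup>2 - b\<^sup>2 \<le> 1" by (smt (verit) zero_le_power2)
    then show ?thesis using d by (simp add: s_def divide_simps)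
  qed
  have "\<epsilon> < 2"
  proof (rule ccontr)
    assume "\<not> \<epsilon> < 2"
    then have "2 * 4 \<le> \<epsilon> * (2 + \<epsilon>)" by (intro mult_mono) auto
    with s_eq \<open>s \<le> 1 / 2\<close> show False by simp
  qed
  define w where "w = \<epsilon> * sqrt (4 - \<epsilon>\<^sup>2)"
  have "\<epsilon>\<^sup>2 < 2\<^sup>2" using eps_pos \<open>\<epsilon> < 2\<close> by (intro power_strict_mono) auto
  then have w_pos: "0 < w" using eps_pos by (simp add: w_def)
  have "sqrt (4 - \<epsilon>\<^sup>2) \<le> sqrt 4" by (rule real_sqrt_le_mono) simp
  then have "sqrt (4 - \<epsilon>\<^sup>2) \<le> 2 + \<epsilon>" using eps_pos by simp
  then have "w \<le> s" using eps_pos s_eq by (simp add: w_def)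
  have "2 / s \<le> r" using r w_pos \<open>w \<le> s\<close> unfolding w_def[symmetric]
    by (meson frac_le order_trans less_eq_real_def order_refl zero_le_numeral)
  then have "2 \<le> r * s" using s_pos by (simp add: divide_le_eq mult.commute)
  also have "r * s \<le> r * (a - b)"
  proof (rule mult_left_mono)
    have "s \<le> d * s" using d s_pos by simp
    also have "\<dots> = (a - b) * (a + b) / 2" using d by (simp add: s_def power2_eq_square field_simps)
    also have "\<dots> \<le> (a - b) * 2 / 2"
      using \<open>b < a\<close> a by (intro divide_right_mono mult_left_mono) auto
    finally show "s \<le> a - b" by simp
    show "0 \<le> r" using \<open>2 / s \<le> r\<close> s_pos by (meson divide_nonneg_pos order_trans zero_le_numeral)
  qed
  finally show ?thesis .
qed

theorem theorem1:
  fixes D K k :: nat and U :: "nat \<Rightarrow> nat \<Rightarrow> complex" and p :: "nat \<Rightarrow> real"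
    and c c' :: nat
  assumes hk: "1 \<le> k" "k \<le> 2^K"
    and hU: "unitary_mat (2^(D+K)) U"
    and hp: "\<exists>i<2^D. p i \<noteq> 0"
    and hc: "c < k"
    and hcmax: "\<forall>c2<k. class_prob D K U (\<lambda>i. p i / vnorm (2^D) p) c2
                        \<le> class_prob D K U (\<lambda>i. p i / vnorm (2^D) p) c"
    and hc': "c' < k" "c' \<noteq> c"
    and hc'max: "\<forall>c2<k. c2 \<noteq> c \<longrightarrow> class_prob D K U (\<lambda>i. p i / vnorm (2^D) p) c2
                        \<le> class_prob D K U (\<lambda>i. p i / vnorm (2^D) p) c'"
    and heps: "0 < sqrt (1 + (1 / (2 * real (2^D))) *
                 (qform D K U c (\<lambda>i. p i / vnorm (2^D) p) - qform D K U c' (\<lambda>i. p i / vnorm (2^D) p))) - 1"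
    and hnorm: "let \<epsilon> = sqrt (1 + (1 / (2 * real (2^D))) *
                 (qform D K U c (\<lambda>i. p i / vnorm (2^D) p) - qform D K U c' (\<lambda>i. p i / vnorm (2^D) p))) - 1
                in vnorm (2^D) p \<ge> 2 / (\<epsilon> * sqrt (4 - \<epsilon>\<^sup>2))"
  shows "\<forall>x :: nat \<Rightarrow> real. vnorm (2^D) x = 1 \<longrightarrow>
           (\<forall>ct<k. class_prob D K U (\<lambda>i. (p i + x i) / vnorm (2^D) (\<lambda>j. p j + x j)) ct
                  \<le> class_prob D K U (\<lambda>i. (p i + x i) / vnorm (2^D) (\<lambda>j. p j + x j)) c)"
proof (intro allI impI)
  fix x :: "nat \<Rightarrow> real" and ct :: nat
  assume x: "vnorm (2^D) x = 1" and ct: "ct < k"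
  define r where "r = vnorm (2^D) p"
  define q where "q = (\<lambda>i. p i / r)"
  define u where "u = (\<lambda>i. p i + x i)"
  have classes: "c < 2^K" "ct < 2^K" "c' < 2^K" using hk hc ct hc' by auto
  have "0 < r" using hp by (simp add: r_def vnorm_pos)
  then have amp_p: "class_amp D K U p c2 = r * class_amp D K U q c2" for c2
    using class_amp_scale[of D K U r q c2] by (simp add: q_def)
  have "vnorm (2^D) q = 1" using \<open>0 < r\<close> by (simp add: q_def r_def vnorm_normalize)
  then have amp_q_le_1: "class_amp D K U q c2 \<le> 1" if "c2 < 2^K" for c2
    using class_amp_le_vnorm[OF hU that, of q] by simp
  define \<epsilon> where "\<epsilon> = sqrt (1 + (1 / (2 * real (2^D))) *
                 ((class_amp D K U q c)\<^sup>2 - (class_amp D K U q c')\<^sup>2)) - 1"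
  have "0 < \<epsilon>" "2 / (\<epsilon> * sqrt (4 - \<epsilon>\<^sup>2)) \<le> r"
    using heps hnorm by (simp_all add: \<epsilon>_def Let_def q_def r_def qform_eq_class_prob class_prob_eq_class_amp_sq)
  then have margin: "2 \<le> r * (class_amp D K U q c - class_amp D K U q c')"
    using amp_q_le_1 classes by (intro epsilon_margin[OF _ _ _ _ \<epsilon>_def]) (auto simp: class_amp_def)
  have "class_amp D K U u ct \<le> class_amp D K U u c"
  proof (cases "ct = c")
    case False
    then have "class_amp D K U q ct \<le> class_amp D K U q c'"
      using hc'max ct by (simp add: q_def r_def class_prob_le_iff_class_amp_le)
    then have "r * class_amp D K U q ct \<le> r * class_amp D K U q c'"
      using \<open>0 < r\<close> by simp
    then have "class_amp D K U p ct + 2 * vnorm (2^D) x \<le> class_amp D K U p c"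
      using margin x by (simp add: amp_p right_diff_distrib)
    then show ?thesis
      unfolding u_def using hU classes by (intro class_amp_order_robust)
  qed simp
  then show "class_prob D K U (\<lambda>i. (p i + x i) / vnorm (2^D) (\<lambda>j. p j + x j)) ct
           \<le> class_prob D K U (\<lambda>i. (p i + x i) / vnorm (2^D) (\<lambda>j. p j + x j)) c"
    unfolding u_def by (intro class_prob_le_scaled) (simp add: class_prob_le_iff_class_amp_le)
qed

end
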